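(* Fix $\varepsilon>0$ and integers $2\le a\le b$. (i) Let $n\to\infty$ and $m=m(n)$ with $m/n\to\infty$. Then all hypergraphs $H\in\mathcal{H}(a,n,m)$, except for $o\!\left(\binom{\binom{n}{a}}{m}\right)$ of them, contain no subhypergraph that is rainbow colorable with $b$ colors and has more than $\binom{b}{a}\frac{a!}{b^a}e(H)(1+\varepsilon)$ hyperedges. (ii) For every integer $k\ge 2$ there exists an $a$-uniform hypergraph $H$ of girth greater than $k$ which contains no subhypergraph that is rainbow colorable with $b$ colors and has more than $\binom{b}{a}\frac{a!}{b^a}e(H)(1+\varepsilon)$ hyperedges.
   Context: $\mathcal{H}(a,n,m)$ is the family of all $a$-uniform hypergraphs on vertex set $[n]$ with exactly $m$ hyperedges; $e(H)$ is the number of hyperedges. A subhypergraph consists of a subset of the hyperedges. A coloring of the vertices with $b$ colors is a rainbow (strong) coloring of a hypergraph if in every hyperedge all vertices receive distinct colors. A Berge-cycle of length $l\ge2$ consists of distinct hyperedges $e_1,\dots,e_l$ and distinct vertices $v_1,\dots,v_l$ with $v_i\in e_i\cap e_{i+1}$ (indices mod $l$); the girth of a hypergraph is the length of a shortest Berge-cycle (infinity if none). *)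

theory Defs
  imports "HOL-Analysis.Analysis"
begin

definition uniform_hypergraph :: "nat \<Rightarrow> 'v set set \<Rightarrow> bool" where
  "uniform_hypergraph a H \<longleftrightarrow> finite H \<and> (\<forall>e\<in>H. finite e \<and> card e = a)"

definition hyp_family :: "nat \<Rightarrow> nat \<Rightarrow> nat \<Rightarrow> nat set set set" where
  "hyp_family a n m = {H. H \<subseteq> {e. e \<subseteq> {1..n} \<and> card e = a} \<and> card H = m}"

definition rainbow_colorable :: "nat \<Rightarrow> 'v set set \<Rightarrow> bool" where
  "rainbow_colorable b F \<longleftrightarrow> (\<exists>c :: 'v \<Rightarrow> nat. (\<forall>v. c v < b) \<and> (\<forall>e\<in>F. inj_on c e))"

definition has_berge_cycle :: "'v set set \<Rightarrow> nat \<Rightarrow> bool" where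
  "has_berge_cycle H l \<longleftrightarrow> 2 \<le> l \<and>
     (\<exists>(e :: nat \<Rightarrow> 'v set) (v :: nat \<Rightarrow> 'v).
        inj_on e {..<l} \<and> inj_on v {..<l} \<and> (\<forall>i<l. e i \<in> H) \<and>
        (\<forall>i<l. v i \<in> e i \<and> v i \<in> e ((i + 1) mod l)))"

definition girth_gt :: "'v set set \<Rightarrow> nat \<Rightarrow> bool" where
  "girth_gt H k \<longleftrightarrow> (\<forall>l. l \<le> k \<longrightarrow> \<not> has_berge_cycle H l)"

definition has_large_rainbow_sub :: "nat \<Rightarrow> real \<Rightarrow> 'v set set \<Rightarrow> bool" where
  "has_large_rainbow_sub b t H \<longleftrightarrow> (\<exists>F\<subseteq>H. rainbow_colorable b F \<and> real (card F) > t)"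

definition rb_const :: "nat \<Rightarrow> nat \<Rightarrow> real" where
  "rb_const a b = real (b choose a) * fact a / real b ^ a"

end

theory Submission
  imports Defs
begin

text \<open>Under a colouring of \<open>[n]\<close> with \<open>b\<close> colours at most \<open>(b choose a) (n / b) ^ a\<close>,
  about \<open>rb_const a b\<close> times \<open>n choose a\<close>, of the \<open>a\<close>-sets are rainbow; equal colour
  classes are the extreme case. In a uniformly random hypergraph with \<open>m\<close> edges, the
  number of edges rainbow for a fixed colouring therefore exceeds
  \<open>(1 + \<epsilon>) rb_const a b m\<close> only with probability \<open>exp (- \<Omega> m)\<close> (a Chernoff bound),
  and a union bound over the \<open>b ^ n\<close> colourings gives (i) once \<open>m / n \<rightarrow> \<infinity>\<close>.
  For (ii) take \<open>n = L ^ k\<close> and \<open>m = n L\<close>: the expected number of Berge cycles of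
  length at most \<open>k\<close> is \<open>O (L ^ k) = o m\<close>, so some hypergraph has few short cycles and
  no large rainbow subhypergraph, and deleting one edge of every short cycle raises the
  girth above \<open>k\<close> while keeping almost all edges.\<close>

section \<open>Rainbow sets under a colouring\<close>

lemma scaled_Bernoulli_inequality:
  fixes B x y :: real
  assumes "B \<ge> 1" "x \<ge> 0" "y \<ge> 0"
  shows "(B * y) ^ k * ((B - real (Suc k)) * y + real (Suc k) * x) \<le> ((B - 1) * y + x) ^ Suc k"
proof (cases "y = 0")
  case True
  then show ?thesis using assms by (cases k) auto
next
  case False
  with assms have By: "B * y > 0" and nz: "B \<noteq> 0" "y \<noteq> 0" by simp_all
  define z where "z = (x - y) / (B * y)"
  have "1 * y \<le> B * y"
    using assms by (intro mult_right_mono) auto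
  then have "-1 \<le> z"
    unfolding z_def using By assms by (simp add: field_simps)
  have lhs: "B * y * (1 + real (Suc k) * z) = (B - real (Suc k)) * y + real (Suc k) * x"
    unfolding z_def using nz by (simp add: field_simps)
  have rhs: "B * y * (1 + z) = (B - 1) * y + x"
    unfolding z_def using nz by (simp add: field_simps)
  have "(B * y) ^ k * ((B - real (Suc k)) * y + real (Suc k) * x)
      = (B * y) ^ Suc k * (1 + real (Suc k) * z)"
    by (metis lhs mult.assoc power_Suc2)
  also have "\<dots> \<le> (B * y) ^ Suc k * (1 + z) ^ Suc k"
    using By \<open>-1 \<le> z\<close> by (intro mult_left_mono Bernoulli_inequality) auto
  also have "\<dots> = ((B - 1) * y + x) ^ Suc k"
    by (simp only: rhs flip: power_mult_distrib)
  finally show ?thesis .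
qed

text \<open>The induction step of the rainbow count below: \<open>b\<close> colour classes of average size \<open>y\<close>
  together with one further class of size \<open>x\<close>.\<close>

lemma binomial_power_step_le:
  fixes x y :: real
  assumes "x \<ge> 0" "y \<ge> 0"
  shows "real (b choose Suc k) * y ^ Suc k + x * real (b choose k) * y ^ k
         \<le> real (Suc b choose Suc k) * (real b * y + x) ^ Suc k / real (Suc b) ^ Suc k"
proof (cases "k \<le> b")
  case False
  then show ?thesis using assms by (simp add: binomial_eq_0)
next
  case True
  define B where "B = Suc b"
  have "(B - Suc k) * (B choose Suc k) = B * (b choose Suc k)"
    using binomial_absorb_comp[of B "Suc k"] unfolding B_def by (simp only: diff_Suc_1)
  then have "real (B - Suc k) * real (B choose Suc k) = real B * real (b choose Suc k)"
    by (metis of_nat_mult)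
  moreover have "Suc k * (B choose Suc k) = B * (b choose k)"
    using binomial_absorption[of k B] unfolding B_def by (simp only: diff_Suc_1)
  then have "real (Suc k) * real (B choose Suc k) = real B * real (b choose k)"
    by (metis of_nat_mult)
  moreover have "real (B - Suc k) = real B - real (Suc k)"
    using True unfolding B_def by simp
  ultimately have h1: "(real B - real (Suc k)) * real (B choose Suc k) = real B * real (b choose Suc k)"
    and h2: "real (Suc k) * real (B choose Suc k) = real B * real (b choose k)"
    by simp_all
  have "real B ^ Suc k * (real (b choose Suc k) * y ^ Suc k + x * real (b choose k) * y ^ k)
      = (real B * y) ^ k * (real B * real (b choose Suc k) * y + real B * real (b choose k) * x)"
    by (simp add: algebra_simps power_mult_distrib)
  also have "\<dots> = (real B * y) ^ k * ((real B - real (Suc k)) * real (B choose Suc k) * y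
      + real (Suc k) * real (B choose Suc k) * x)"
    by (simp only: h1 h2)
  also have "\<dots> = real (B choose Suc k) * ((real B * y) ^ k * ((real B - real (Suc k)) * y + real (Suc k) * x))"
    by (simp add: algebra_simps)
  also have "\<dots> \<le> real (B choose Suc k) * ((real B - 1) * y + x) ^ Suc k"
    using assms unfolding B_def by (intro mult_left_mono scaled_Bernoulli_inequality) auto
  finally have "(real (b choose Suc k) * y ^ Suc k + x * real (b choose k) * y ^ k) * real B ^ Suc k
      \<le> real (B choose Suc k) * (real b * y + x) ^ Suc k"
    unfolding B_def by (simp add: mult.commute)
  then show ?thesis
    unfolding B_def by (simp add: pos_le_divide_eq del: of_nat_Suc)
qed

definition rainbow_subsets :: "('v \<Rightarrow> nat) \<Rightarrow> 'v set \<Rightarrow> nat \<Rightarrow> 'v set set" where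
  "rainbow_subsets c V k = {e. e \<subseteq> V \<and> card e = k \<and> inj_on c e}"

lemma finite_rainbow_subsets: "finite V \<Longrightarrow> finite (rainbow_subsets c V k)"
  unfolding rainbow_subsets_def by (rule finite_subset[of _ "Pow V"]) auto

lemma rainbow_subsets_0: "finite V \<Longrightarrow> rainbow_subsets c V 0 = {{}}"
  unfolding rainbow_subsets_def by (auto dest: finite_subset)

lemma rainbow_subsets_empty_Suc: "rainbow_subsets c {} (Suc k) = {}"
  unfolding rainbow_subsets_def by auto

lemma rainbow_subsets_Suc_subset:
  "rainbow_subsets c V (Suc k) \<subseteq> rainbow_subsets c {v \<in> V. c v \<noteq> x} (Suc k)
    \<union> (\<Union>y\<in>{v \<in> V. c v = x}. insert y ` rainbow_subsets c {v \<in> V. c v \<noteq> x} k)"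
proof
  fix e assume "e \<in> rainbow_subsets c V (Suc k)"
  then have eV: "e \<subseteq> V" and card_e: "card e = Suc k" and inj: "inj_on c e"
    unfolding rainbow_subsets_def by auto
  show "e \<in> rainbow_subsets c {v \<in> V. c v \<noteq> x} (Suc k)
    \<union> (\<Union>y\<in>{v \<in> V. c v = x}. insert y ` rainbow_subsets c {v \<in> V. c v \<noteq> x} k)"
  proof (cases "\<exists>y\<in>e. c y = x")
    case False
    then show ?thesis
      using eV card_e inj unfolding rainbow_subsets_def by auto
  next
    case True
    then obtain y where y: "y \<in> e" "c y = x" by auto
    have "e - {y} \<in> rainbow_subsets c {v \<in> V. c v \<noteq> x} k"
      using y eV card_e inj unfolding rainbow_subsets_def by (auto dest: inj_onD intro: inj_on_subset)
    moreover have "e = insert y (e - {y})"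
      using y by auto
    ultimately show ?thesis
      using y eV by blast
  qed
qed

lemma card_rainbow_subsets_Suc_le:
  fixes c :: "'v \<Rightarrow> nat" and x :: nat
  assumes "finite V"
  defines "V' \<equiv> {v \<in> V. c v \<noteq> x}" and "X \<equiv> {v \<in> V. c v = x}"
  shows "card (rainbow_subsets c V (Suc k))
    \<le> card (rainbow_subsets c V' (Suc k)) + card X * card (rainbow_subsets c V' k)"
proof -
  have fin: "finite V'" "finite X"
    using assms(1) unfolding V'_def X_def by auto
  have "card (rainbow_subsets c V (Suc k))
      \<le> card (rainbow_subsets c V' (Suc k) \<union> (\<Union>y\<in>X. insert y ` rainbow_subsets c V' k))"
    using fin rainbow_subsets_Suc_subset[of c V k x] unfolding V'_def X_def
    by (intro card_mono) (auto intro: finite_rainbow_subsets)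
  also have "\<dots> \<le> card (rainbow_subsets c V' (Suc k)) + (\<Sum>y\<in>X. card (insert y ` rainbow_subsets c V' k))"
    using card_UN_le[OF fin(2), of "\<lambda>y. insert y ` rainbow_subsets c V' k"]
    by (intro order_trans[OF card_Un_le]) simp
  also have "\<dots> \<le> card (rainbow_subsets c V' (Suc k)) + card X * card (rainbow_subsets c V' k)"
    using sum_mono[of X "\<lambda>y. card (insert y ` rainbow_subsets c V' k)" "\<lambda>_. card (rainbow_subsets c V' k)"]
    by (simp add: card_image_le finite_rainbow_subsets fin)
  finally show ?thesis .
qed

text \<open>The right-hand side is the count for \<open>b\<close> colour classes of equal size.\<close>

lemma card_rainbow_subsets_le:
  fixes c :: "'v \<Rightarrow> nat"
  assumes "finite V" "c ` V \<subseteq> {..<b}"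
  shows "real (card (rainbow_subsets c V a)) \<le> real (b choose a) * (real (card V) / real b) ^ a"
  using assms
proof (induction b arbitrary: V a)
  case 0
  then show ?case
    by (cases a) (auto simp: rainbow_subsets_0 rainbow_subsets_empty_Suc)
next
  case (Suc b)
  show ?case
  proof (cases a)
    case 0
    then show ?thesis using Suc.prems by (simp add: rainbow_subsets_0)
  next
    case (Suc k)
    define V' where "V' = {v \<in> V. c v \<noteq> b}"
    define X where "X = {v \<in> V. c v = b}"
    define y where "y = real (card V') / real b"
    have V': "finite V'" "c ` V' \<subseteq> {..<b}"
      using Suc.prems unfolding V'_def by auto
    have "card V = card V' + card X"
      using Suc.prems(1) unfolding V'_def X_def
      by (subst card_Un_disjoint[symmetric]) (auto intro: arg_cong[where f = card])
    moreover have "real b * y = real (card V')"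
      using V' unfolding y_def by (cases "b = 0") auto
    ultimately have V_eq: "real (card V) = real b * y + real (card X)"
      by simp
    have "real (card (rainbow_subsets c V (Suc k)))
        \<le> real (card (rainbow_subsets c V' (Suc k))) + real (card X) * real (card (rainbow_subsets c V' k))"
      using card_rainbow_subsets_Suc_le[OF Suc.prems(1), where x = b and k = k]
      unfolding V'_def X_def by (simp flip: of_nat_mult of_nat_add)
    also have "\<dots> \<le> real (b choose Suc k) * y ^ Suc k + real (card X) * (real (b choose k) * y ^ k)"
      by (intro add_mono mult_left_mono Suc.IH[OF V', folded y_def]) auto
    also have "\<dots> \<le> real (Suc b choose Suc k) * (real (card V) / real (Suc b)) ^ Suc k"
      using binomial_power_step_le[of "real (card X)" y b k]
      unfolding V_eq y_def by (simp add: power_divide mult.assoc)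
    finally show ?thesis
      unfolding \<open>a = Suc k\<close> .
  qed
qed

section \<open>Large intersections with a random set\<close>

lemma binomial_diff_mult_power_le:
  assumes "s \<le> m" "m \<le> N"
  shows "real (N - s choose (m - s)) * real N ^ s \<le> real (N choose m) * real m ^ s"
  using assms
proof (induction s)
  case 0
  then show ?case by simp
next
  case (Suc s)
  define N' where "N' = N - s"
  define m' where "m' = m - s"
  have m': "1 \<le> m'" "m' \<le> N'"
    using Suc.prems unfolding N'_def m'_def by auto
  have IH: "real (N' choose m') * real N ^ s \<le> real (N choose m) * real m ^ s"
    using Suc unfolding N'_def m'_def by simp
  have shift: "N - Suc s = N' - 1" "m - Suc s = m' - 1"
    unfolding N'_def m'_def by simp_all
  have "m' * (N' choose m') = N' * (N' - 1 choose (m' - 1))"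
    using binomial_absorption[of "m' - 1" N'] m' by simp
  then have absorb: "real (N' - 1 choose (m' - 1)) = real m' * real (N' choose m') / real N'"
    using m' by (simp add: field_simps flip: of_nat_mult)
  have "real m' * real N \<le> real m * real N'"
    using Suc.prems mult_right_mono[of "real m" "real N" "real s"]
    unfolding m'_def N'_def by (simp add: of_nat_diff algebra_simps)
  then have ratio: "real m' * real N / real N' \<le> real m"
    using m' by (simp add: field_simps)
  have "real (N - Suc s choose (m - Suc s)) * real N ^ Suc s
      = real m' * real N / real N' * (real (N' choose m') * real N ^ s)"
    unfolding shift absorb by (simp add: algebra_simps)
  also have "\<dots> \<le> real m * (real (N choose m) * real m ^ s)"
    by (rule mult_mono[OF ratio IH]) auto
  finally show ?case by (simp add: mult_ac)
qed

lemma card_supersets_le: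
  assumes "finite U" "S \<subseteq> U"
  shows "real (card {H. H \<subseteq> U \<and> card H = m \<and> S \<subseteq> H})
    \<le> real (card U choose m) * (real m / real (card U)) ^ card S"
proof (cases "card S \<le> m \<and> m \<le> card U")
  case False
  have "card S \<le> card H" "card H \<le> card U" if "H \<subseteq> U" "S \<subseteq> H" for H
    using that assms by (meson card_mono finite_subset)+
  with False have "{H. H \<subseteq> U \<and> card H = m \<and> S \<subseteq> H} = {}"
    by auto
  then show ?thesis
    by (simp only: card.empty of_nat_0) simp
next
  case True
  have fS: "finite S"
    using assms finite_subset by auto
  have "{H. H \<subseteq> U \<and> card H = m \<and> S \<subseteq> H} \<subseteq> (\<lambda>A. A \<union> S) ` {A. A \<subseteq> U - S \<and> card A = m - card S}"
  proof
    fix H assume H: "H \<in> {H. H \<subseteq> U \<and> card H = m \<and> S \<subseteq> H}"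
    then have "H = (H - S) \<union> S" "H - S \<subseteq> U - S" "card (H - S) = m - card S"
      using fS by (auto simp: card_Diff_subset)
    then show "H \<in> (\<lambda>A. A \<union> S) ` {A. A \<subseteq> U - S \<and> card A = m - card S}"
      by blast
  qed
  then have "card {H. H \<subseteq> U \<and> card H = m \<and> S \<subseteq> H} \<le> card {A. A \<subseteq> U - S \<and> card A = m - card S}"
    using assms(1) by (intro order_trans[OF card_mono card_image_le]) auto
  also have "\<dots> = card U - card S choose (m - card S)"
    using assms fS by (simp add: n_subsets card_Diff_subset)
  finally have "real (card {H. H \<subseteq> U \<and> card H = m \<and> S \<subseteq> H}) * real (card U) ^ card S
      \<le> real (card U - card S choose (m - card S)) * real (card U) ^ card S"
    by (intro mult_right_mono) auto
  also have "\<dots> \<le> real (card U choose m) * real m ^ card S"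
    using True by (intro binomial_diff_mult_power_le) auto
  finally have "real (card {H. H \<subseteq> U \<and> card H = m \<and> S \<subseteq> H}) * real (card U) ^ card S
      \<le> real (card U choose m) * real m ^ card S" .
  moreover have "card U = 0 \<Longrightarrow> card S = 0"
    using True by simp
  ultimately show ?thesis
    by (cases "card U = 0") (simp_all add: power_divide field_simps)
qed

lemma power_card_eq_sum_Pow:
  fixes z :: "'a :: comm_semiring_1"
  assumes "finite A"
  shows "(1 + z) ^ card A = (\<Sum>S\<in>Pow A. z ^ card S)"
  using prod_add[OF assms, of "\<lambda>_. z" "\<lambda>_. 1"] by (simp add: add.commute)

text \<open>Expand \<open>lam ^ card (H \<inter> R)\<close> as the sum of \<open>(lam - 1) ^ card S\<close> over \<open>S \<subseteq> H \<inter> R\<close> and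
  count, for each \<open>S\<close>, the \<open>m\<close>-sets containing it.\<close>

lemma sum_power_card_Int_le:
  fixes lam :: real
  assumes "finite U" "R \<subseteq> U" "1 \<le> lam"
  shows "(\<Sum>H\<in>{H. H \<subseteq> U \<and> card H = m}. lam ^ card (H \<inter> R))
    \<le> real (card U choose m) * (1 + (lam - 1) * real m / real (card U)) ^ card R"
proof -
  define F where "F = {H. H \<subseteq> U \<and> card H = m}"
  define p where "p = real m / real (card U)"
  define g where "g S = (lam - 1) ^ card S" for S :: "'a set"
  have fin: "finite R" "finite F"
    using assms(1,2) unfolding F_def by (auto intro: finite_subset)
  have expand: "lam ^ card (H \<inter> R) = (\<Sum>S\<in>Pow R. g S * of_bool (S \<subseteq> H))" for H
  proof -
    have "lam ^ card (H \<inter> R) = (\<Sum>S\<in>Pow (H \<inter> R). g S)"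
      using power_card_eq_sum_Pow[of "H \<inter> R" "lam - 1"] fin unfolding g_def by simp
    also have "\<dots> = (\<Sum>S\<in>Pow R. g S * of_bool (S \<subseteq> H))"
      using fin by (intro sum.mono_neutral_cong_left) auto
    finally show ?thesis .
  qed
  have "(\<Sum>H\<in>F. lam ^ card (H \<inter> R)) = (\<Sum>S\<in>Pow R. \<Sum>H\<in>F. g S * of_bool (S \<subseteq> H))"
    unfolding expand by (rule sum.swap)
  also have "\<dots> = (\<Sum>S\<in>Pow R. g S * real (card (F \<inter> {H. S \<subseteq> H})))"
    using fin by (simp flip: sum_distrib_left)
  also have "\<dots> \<le> (\<Sum>S\<in>Pow R. g S * (real (card U choose m) * p ^ card S))"
  proof (intro sum_mono mult_left_mono)
    fix S assume "S \<in> Pow R"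
    then have "S \<subseteq> U"
      using assms(2) by auto
    moreover have "F \<inter> {H. S \<subseteq> H} = {H. H \<subseteq> U \<and> card H = m \<and> S \<subseteq> H}"
      unfolding F_def by auto
    ultimately show "real (card (F \<inter> {H. S \<subseteq> H})) \<le> real (card U choose m) * p ^ card S"
      unfolding p_def using card_supersets_le[OF assms(1)] by simp
  qed (use assms(3) in \<open>simp add: g_def\<close>)
  also have "\<dots> = real (card U choose m) * (1 + (lam - 1) * p) ^ card R"
    using power_card_eq_sum_Pow[OF fin(1), of "(lam - 1) * p"]
    by (simp add: g_def sum_distrib_left power_mult_distrib mult_ac)
  finally show ?thesis
    unfolding F_def p_def by (simp add: mult.assoc)
qed

text \<open>Markov's inequality for \<open>lam ^ card (H \<inter> R)\<close>, followed by \<open>1 + z \<le> exp z\<close>.\<close>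

lemma card_large_Int_le:
  fixes lam t :: real
  assumes "finite U" "R \<subseteq> U" "1 \<le> lam"
  shows "real (card {H. H \<subseteq> U \<and> card H = m \<and> t < real (card (H \<inter> R))})
    \<le> real (card U choose m) * exp (- t * ln lam + (lam - 1) * real m / real (card U) * real (card R))"
proof -
  define F where "F = {H. H \<subseteq> U \<and> card H = m}"
  define Bad where "Bad = {H. H \<subseteq> U \<and> card H = m \<and> t < real (card (H \<inter> R))}"
  define q where "q = (lam - 1) * real m / real (card U)"
  have "0 < lam" "0 \<le> q"
    using assms(3) unfolding q_def by auto
  have "real (card Bad) * exp (t * ln lam) = (\<Sum>H\<in>Bad. exp (t * ln lam))"
    by simp
  also have "\<dots> \<le> (\<Sum>H\<in>Bad. lam ^ card (H \<inter> R))"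
  proof (rule sum_mono)
    fix H assume "H \<in> Bad"
    then have "exp (t * ln lam) \<le> exp (real (card (H \<inter> R)) * ln lam)"
      using assms(3) unfolding Bad_def by (simp add: mult_right_mono)
    then show "exp (t * ln lam) \<le> lam ^ card (H \<inter> R)"
      using \<open>0 < lam\<close> by (simp add: exp_of_nat_mult)
  qed
  also have "\<dots> \<le> (\<Sum>H\<in>F. lam ^ card (H \<inter> R))"
    using assms unfolding Bad_def F_def
    by (intro sum_mono2) (auto intro: finite_subset[of _ "Pow U"])
  also have "\<dots> \<le> real (card U choose m) * (1 + q) ^ card R"
    unfolding F_def q_def using assms by (simp add: sum_power_card_Int_le)
  also have "\<dots> \<le> real (card U choose m) * exp (q * real (card R))"
  proof (rule mult_left_mono)
    have "(1 + q) ^ card R \<le> exp q ^ card R"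
      using \<open>0 \<le> q\<close> by (intro power_mono) (auto simp: add.commute exp_ge_add_one_self)
    then show "(1 + q) ^ card R \<le> exp (q * real (card R))"
      by (simp add: exp_of_nat_mult[symmetric] mult.commute)
  qed simp
  finally show ?thesis
    unfolding Bad_def q_def by (simp add: exp_diff exp_minus field_simps)
qed

text \<open>The exponent of \<open>card_large_Int_le\<close> for \<open>lam = 1 + u\<close>, when \<open>R\<close> has density at most
  \<open>r (1 + u)\<close> in a ground set of size \<open>N\<close>.\<close>

lemma chernoff_exponent_le:
  fixes u r m N R t :: real
  assumes u: "0 < u" "u \<le> 1/4" and r: "0 < r" and m: "0 \<le> m" and N: "0 < N"
    and R: "R \<le> r * (1 + u) * N" and t: "r * (1 + 4 * u) * m \<le> t"
  shows "- t * ln (1 + u) + u * m / N * R \<le> - r * u\<^sup>2 * m"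
proof -
  have ln: "u - u\<^sup>2 \<le> ln (1 + u)" "0 \<le> u - u\<^sup>2"
    using ln_one_plus_pos_lower_bound[of u] u by (simp_all add: power2_eq_square)
  have "0 \<le> r * (1 + 4 * u) * m"
    using r m u by simp
  then have "r * (1 + 4 * u) * m * (u - u\<^sup>2) \<le> t * ln (1 + u)"
    using t ln by (intro mult_mono) auto
  moreover have "u * m / N * R \<le> u * m / N * (r * (1 + u) * N)"
    using u m N by (intro mult_left_mono R) auto
  moreover have "u * m / N * (r * (1 + u) * N) = r * m * (u + u\<^sup>2)"
    using N by (simp add: field_simps power2_eq_square)
  moreover have "r * (1 + 4 * u) * m * (u - u\<^sup>2) = r * m * (u + 3 * u\<^sup>2 - 4 * u ^ 3)"
    by (simp add: field_simps power2_eq_square power3_eq_cube)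
  moreover have "r * m * (u + u\<^sup>2) - r * m * (u + 3 * u\<^sup>2 - 4 * u ^ 3) \<le> - r * u\<^sup>2 * m"
  proof -
    have "r * m * (4 * u ^ 3 - u\<^sup>2) \<le> 0"
      using u r m by (intro mult_nonneg_nonpos) (auto simp: power2_eq_square power3_eq_cube)
    then show ?thesis
      by (simp add: algebra_simps)
  qed
  ultimately show ?thesis
    by linarith
qed

section \<open>Rainbow subhypergraphs of random hypergraphs\<close>

definition complete_hypergraph :: "nat \<Rightarrow> nat \<Rightarrow> nat set set" where
  "complete_hypergraph n a = {e. e \<subseteq> {1..n} \<and> card e = a}"

lemma finite_complete_hypergraph: "finite (complete_hypergraph n a)"
  unfolding complete_hypergraph_def by (rule finite_subset[of _ "Pow {1..n}"]) auto

lemma card_complete_hypergraph: "card (complete_hypergraph n a) = n choose a"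
  unfolding complete_hypergraph_def using n_subsets[of "{1..n}" a] by simp

lemma hyp_family_eq: "hyp_family a n m = {H. H \<subseteq> complete_hypergraph n a \<and> card H = m}"
  unfolding hyp_family_def complete_hypergraph_def by simp

lemma finite_hyp_family: "finite (hyp_family a n m)"
  unfolding hyp_family_eq
  by (rule finite_subset[of _ "Pow (complete_hypergraph n a)"]) (auto intro: finite_complete_hypergraph)

lemma card_hyp_family: "card (hyp_family a n m) = (n choose a) choose m"
  unfolding hyp_family_eq
  by (simp add: n_subsets finite_complete_hypergraph card_complete_hypergraph)

lemma rb_const_pos: "a \<le> b \<Longrightarrow> 0 < b \<Longrightarrow> rb_const a b > 0"
  unfolding rb_const_def by (simp add: zero_less_binomial_iff)

lemma rainbow_subsets_complete_hypergraph:
  "rainbow_subsets c {1..n} a = {e \<in> complete_hypergraph n a. inj_on c e}"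
  unfolding rainbow_subsets_def complete_hypergraph_def by auto

lemma large_rainbow_sub_imp_heavy_colouring:
  assumes "H \<subseteq> complete_hypergraph n a" "has_large_rainbow_sub b t H"
  obtains c where "c \<in> (\<Pi>\<^sub>E v\<in>{1..n}. {..<b})" "t < real (card (H \<inter> rainbow_subsets c {1..n} a))"
proof -
  from assms(2) obtain F c0 where F: "F \<subseteq> H" "\<forall>v. c0 v < b" "\<forall>e\<in>F. inj_on c0 e" "t < real (card F)"
    unfolding has_large_rainbow_sub_def rainbow_colorable_def by blast
  define c where "c = restrict c0 {1..n}"
  have "inj_on c e" if "e \<in> F" for e
  proof -
    have "e \<subseteq> {1..n}"
      using that F(1) assms(1) unfolding complete_hypergraph_def by auto
    then have "inj_on c e = inj_on c0 e"
      unfolding c_def by (intro inj_on_cong) auto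
    then show ?thesis
      using F(3) that by simp
  qed
  then have "F \<subseteq> H \<inter> rainbow_subsets c {1..n} a"
    using F(1) assms(1) unfolding rainbow_subsets_complete_hypergraph by auto
  moreover have "finite H"
    using assms(1) finite_complete_hypergraph by (rule finite_subset)
  ultimately have "card F \<le> card (H \<inter> rainbow_subsets c {1..n} a)"
    by (intro card_mono) auto
  moreover have "c \<in> (\<Pi>\<^sub>E v\<in>{1..n}. {..<b})"
    unfolding c_def using F(2) by auto
  ultimately show ?thesis
    using that F(4) by force
qed

lemma card_heavy_for_colouring_le:
  fixes u t :: real
  assumes c: "c ` {1..n} \<subseteq> {..<b}" and ab: "a \<le> b" "0 < b"
    and u: "0 < u" "u \<le> 1/4"
    and n: "0 < n choose a" "real n ^ a \<le> (1 + u) * fact a * real (n choose a)"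
    and t: "rb_const a b * (1 + 4 * u) * real m \<le> t"
  shows "real (card {H. H \<subseteq> complete_hypergraph n a \<and> card H = m
            \<and> t < real (card (H \<inter> rainbow_subsets c {1..n} a))})
    \<le> real ((n choose a) choose m) * exp (- rb_const a b * u\<^sup>2 * real m)"
proof -
  define K where "K = complete_hypergraph n a"
  define R where "R = rainbow_subsets c {1..n} a"
  define N where "N = real (n choose a)"
  have RK: "R \<subseteq> K"
    unfolding R_def K_def rainbow_subsets_complete_hypergraph by auto
  have "real (card R) \<le> real (b choose a) * real n ^ a / real b ^ a"
    using card_rainbow_subsets_le[of "{1..n}" c b a] c unfolding R_def by (simp add: power_divide)
  also have "\<dots> \<le> real (b choose a) * ((1 + u) * fact a * N) / real b ^ a"
    using n unfolding N_def by (intro divide_right_mono mult_left_mono) auto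
  also have "\<dots> = rb_const a b * (1 + u) * N"
    unfolding rb_const_def by (simp add: field_simps)
  finally have R: "real (card R) \<le> rb_const a b * (1 + u) * N" .
  have "real (card {H. H \<subseteq> K \<and> card H = m \<and> t < real (card (H \<inter> R))})
      \<le> real (card K choose m) * exp (- t * ln (1 + u) + (1 + u - 1) * real m / real (card K) * real (card R))"
    using u by (intro card_large_Int_le[OF _ RK]) (auto simp: K_def finite_complete_hypergraph)
  also have "\<dots> \<le> real (card K choose m) * exp (- rb_const a b * u\<^sup>2 * real m)"
    using chernoff_exponent_le[OF u rb_const_pos[OF ab] _ _ R t] n
    unfolding N_def K_def card_complete_hypergraph by (intro mult_left_mono) auto
  finally show ?thesis
    unfolding K_def R_def card_complete_hypergraph .
qed

lemma card_rainbow_excess_le: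
  fixes u t :: real
  assumes ab: "a \<le> b" "0 < b"
    and u: "0 < u" "u \<le> 1/4"
    and n: "0 < n choose a" "real n ^ a \<le> (1 + u) * fact a * real (n choose a)"
    and t: "rb_const a b * (1 + 4 * u) * real m \<le> t"
  shows "real (card {H \<in> hyp_family a n m. has_large_rainbow_sub b t H})
    \<le> real ((n choose a) choose m) * real b ^ n * exp (- rb_const a b * u\<^sup>2 * real m)"
proof -
  define Col where "Col = (\<Pi>\<^sub>E v\<in>{1..n}. {..<b})"
  define Heavy where "Heavy c = {H. H \<subseteq> complete_hypergraph n a \<and> card H = m
    \<and> t < real (card (H \<inter> rainbow_subsets c {1..n} a))}" for c :: "nat \<Rightarrow> nat"
  have "{H \<in> hyp_family a n m. has_large_rainbow_sub b t H} \<subseteq> (\<Union>c\<in>Col. Heavy c)"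
  proof
    fix H assume "H \<in> {H \<in> hyp_family a n m. has_large_rainbow_sub b t H}"
    then have H: "H \<subseteq> complete_hypergraph n a" "card H = m" "has_large_rainbow_sub b t H"
      unfolding hyp_family_eq by auto
    from H(1,3) obtain c where "c \<in> Col" "t < real (card (H \<inter> rainbow_subsets c {1..n} a))"
      unfolding Col_def by (rule large_rainbow_sub_imp_heavy_colouring)
    with H show "H \<in> (\<Union>c\<in>Col. Heavy c)"
      unfolding Heavy_def by auto
  qed
  then have "card {H \<in> hyp_family a n m. has_large_rainbow_sub b t H} \<le> card (\<Union>c\<in>Col. Heavy c)"
    by (rule card_mono[rotated])
      (auto intro: finite_subset[OF _ finite_hyp_family[of a n m]] simp: Heavy_def hyp_family_eq)
  also have "\<dots> \<le> (\<Sum>c\<in>Col. card (Heavy c))"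
    by (rule card_UN_le) (simp add: Col_def finite_PiE)
  finally have "real (card {H \<in> hyp_family a n m. has_large_rainbow_sub b t H})
      \<le> (\<Sum>c\<in>Col. real (card (Heavy c)))"
    by (simp flip: of_nat_sum)
  also have "\<dots> \<le> (\<Sum>c\<in>Col. real ((n choose a) choose m) * exp (- rb_const a b * u\<^sup>2 * real m))"
    unfolding Heavy_def Col_def
    by (intro sum_mono card_heavy_for_colouring_le ab u n t) (auto simp: PiE_iff)
  also have "\<dots> = real ((n choose a) choose m) * real b ^ n * exp (- rb_const a b * u\<^sup>2 * real m)"
    by (simp add: Col_def card_PiE)
  finally show ?thesis .
qed

lemma card_rainbow_excess_le_exp:
  fixes u t :: real
  assumes ab: "a \<le> b" "0 < b" and u: "0 < u" "u \<le> 1/4"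
    and n: "a \<le> n" "real n ^ a \<le> (1 + u) * fact a * real (n choose a)"
    and m: "real n * (ln (real b) + 1) \<le> rb_const a b * u\<^sup>2 * real m"
    and t: "rb_const a b * (1 + 4 * u) * real m \<le> t"
  shows "real (card {H \<in> hyp_family a n m. has_large_rainbow_sub b t H})
    \<le> real ((n choose a) choose m) * exp (- real n)"
proof -
  have "real (card {H \<in> hyp_family a n m. has_large_rainbow_sub b t H})
      \<le> real ((n choose a) choose m) * (real b ^ n * exp (- rb_const a b * u\<^sup>2 * real m))"
    using card_rainbow_excess_le[OF ab u _ n(2) t] n(1) by (simp add: mult.assoc)
  also have "real b ^ n * exp (- rb_const a b * u\<^sup>2 * real m)
      = exp (real n * ln (real b) - rb_const a b * u\<^sup>2 * real m)"
    using ab by (simp add: exp_diff exp_minus exp_of_nat_mult field_simps)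
  also have "\<dots> \<le> exp (- real n)"
    using m by (simp add: algebra_simps)
  finally show ?thesis
    by (simp add: mult_left_mono)
qed

lemma falling_power_le_binomial:
  "a \<le> n \<Longrightarrow> real (n - a) ^ a \<le> fact a * real (n choose a)"
proof (induction a arbitrary: n)
  case 0 then show ?case by simp
next
  case (Suc a)
  then obtain n' where n': "n = Suc n'" by (cases n) auto
  have "a \<le> n'" using Suc.prems n' by simp
  have IH: "real (n' - a) ^ a \<le> fact a * real (n' choose a)" using Suc.IH \<open>a \<le> n'\<close> .
  have "real (n - Suc a) ^ Suc a = real (n' - a) * real (n' - a) ^ a" using n' by simp
  also have "\<dots> \<le> real n * (fact a * real (n' choose a))"
    by (rule mult_mono[OF _ IH]) (use n' in auto)
  also have "\<dots> = fact (Suc a) * real (n choose Suc a)"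
  proof -
    have "Suc a * (n choose Suc a) = n * (n' choose a)" using binomial_absorption[of a n] n' by simp
    then have "real (Suc a) * real (n choose Suc a) = real n * real (n' choose a)" by (metis of_nat_mult)
    then have "fact a * (real (Suc a) * real (n choose Suc a)) = fact a * (real n * real (n' choose a))"
      by simp
    then show ?thesis
      by (simp add: algebra_simps)
  qed
  finally show ?case .
qed

lemma eventually_power_le_binomial:
  fixes u :: real and a :: nat
  assumes "u > 0"
  shows "eventually (\<lambda>n. a \<le> n \<and> real n ^ a \<le> (1 + u) * fact a * real (n choose a)) at_top"
proof -
  have "((\<lambda>n. real a / real n) \<longlongrightarrow> 0) at_top"
    by (rule tendsto_divide_0[OF tendsto_const filterlim_at_top_imp_at_infinity[OF filterlim_real_sequentially]])
  then have "((\<lambda>n. (1 - real a / real n) ^ a) \<longlongrightarrow> (1 - 0) ^ a) at_top"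
    by (intro tendsto_intros)
  then have "eventually (\<lambda>n. (1 - real a / real n) ^ a > 1 / (1 + u)) at_top"
    using assms by (intro order_tendstoD(1)) auto
  moreover have "eventually (\<lambda>n. a < n) at_top" by (rule eventually_gt_at_top)
  ultimately show ?thesis
  proof eventually_elim
    case (elim n)
    then have pos: "real n - real a > 0" "real n > 0" by auto
    have e: "real n ^ a * (1 - real a / real n) ^ a = (real n - real a) ^ a"
      using pos by (simp add: power_mult_distrib[symmetric] field_simps)
    have "real n ^ a * (1 / (1 + u)) \<le> real n ^ a * (1 - real a / real n) ^ a"
      by (rule mult_left_mono) (use elim pos in auto)
    then have "real n ^ a \<le> (1 + u) * (real n - real a) ^ a"
      unfolding e using assms by (simp add: field_simps)
    also have "(real n - real a) = real (n - a)" using elim by simp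
    also have "(1 + u) * real (n - a) ^ a \<le> (1 + u) * (fact a * real (n choose a))"
      by (rule mult_left_mono[OF falling_power_le_binomial]) (use elim assms in auto)
    finally show ?case using elim by (simp add: mult.assoc)
  qed
qed

lemma rainbow_excess_fraction_tendsto_0:
  fixes \<epsilon> :: real and m :: "nat \<Rightarrow> nat"
  assumes eps: "\<epsilon> > 0" and ab: "2 \<le> a" "a \<le> b"
    and m: "filterlim (\<lambda>n. real (m n) / real n) at_top at_top"
  shows "(\<lambda>n. real (card {H \<in> hyp_family a n (m n).
            has_large_rainbow_sub b (rb_const a b * real (card H) * (1 + \<epsilon>)) H})
          / real ((n choose a) choose (m n))) \<longlonglongrightarrow> 0"
proof (rule Lim_null_comparison)
  define u where "u = min \<epsilon> 1 / 4"
  define \<delta> where "\<delta> = rb_const a b * u\<^sup>2"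
  have u: "0 < u" "u \<le> 1/4" "1 + 4 * u \<le> 1 + \<epsilon>"
    unfolding u_def using eps by auto
  have b: "0 < b" "0 < real b"
    using ab by auto
  have "\<delta> > 0"
    unfolding \<delta>_def using rb_const_pos[OF ab(2) b(1)] u by simp
  have "eventually (\<lambda>n. a \<le> n \<and> real n ^ a \<le> (1 + u) * fact a * real (n choose a)) at_top"
    using u by (intro eventually_power_le_binomial) auto
  moreover have "eventually (\<lambda>n. (ln (real b) + 1) / \<delta> \<le> real (m n) / real n) at_top"
    using m unfolding filterlim_at_top by blast
  ultimately show "eventually (\<lambda>n. norm (real (card {H \<in> hyp_family a n (m n).
            has_large_rainbow_sub b (rb_const a b * real (card H) * (1 + \<epsilon>)) H})
          / real ((n choose a) choose (m n))) \<le> exp (-1) ^ n) sequentially"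
  proof eventually_elim
    case (elim n)
    let ?Bad = "{H \<in> hyp_family a n (m n). has_large_rainbow_sub b (rb_const a b * real (m n) * (1 + \<epsilon>)) H}"
    have "rb_const a b * ((1 + 4 * u) * real (m n)) \<le> rb_const a b * ((1 + \<epsilon>) * real (m n))"
      using u rb_const_pos[OF ab(2) b(1)] by (intro mult_left_mono mult_right_mono) auto
    moreover have "real n > 0"
      using elim ab by simp
    with elim \<open>\<delta> > 0\<close> have "real n * (ln (real b) + 1) \<le> \<delta> * real (m n)"
      by (simp add: field_simps)
    ultimately have "real (card ?Bad) \<le> real ((n choose a) choose m n) * exp (- real n)"
      using elim unfolding \<delta>_def
      by (intro card_rainbow_excess_le_exp[OF ab(2) b(1) u(1,2)]) (simp_all add: mult_ac)
    then have "real (card ?Bad) / real ((n choose a) choose m n) \<le> exp (-1) ^ n"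
      by (cases "(n choose a) choose m n = 0")
        (simp_all add: pos_divide_le_eq mult.commute flip: exp_of_nat_mult)
    moreover have "{H \<in> hyp_family a n (m n).
        has_large_rainbow_sub b (rb_const a b * real (card H) * (1 + \<epsilon>)) H} = ?Bad"
      unfolding hyp_family_def by auto
    ultimately show ?case
      by simp
  qed
qed (rule LIMSEQ_power_zero, simp)

section \<open>Short Berge cycles\<close>

text \<open>The Berge cycles of \<open>has_berge_cycle\<close>, with vertex and edge sequences made extensional
  on \<open>{..<l}\<close> so that they can be counted.\<close>

definition berge_cycles :: "nat \<Rightarrow> nat \<Rightarrow> nat set set \<Rightarrow> ((nat \<Rightarrow> nat) \<times> (nat \<Rightarrow> nat set)) set" where
  "berge_cycles n l G = {(v, e). v \<in> (\<Pi>\<^sub>E i\<in>{..<l}. {1..n}) \<and> e \<in> (\<Pi>\<^sub>E i\<in>{..<l}. G) \<and>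
      inj_on v {..<l} \<and> inj_on e {..<l} \<and> (\<forall>i<l. v i \<in> e i \<and> v i \<in> e ((i + 1) mod l))}"

lemma finite_berge_cycles: "finite G \<Longrightarrow> finite (berge_cycles n l G)"
  unfolding berge_cycles_def
  by (rule finite_subset[of _ "(\<Pi>\<^sub>E i\<in>{..<l}. {1..n}) \<times> (\<Pi>\<^sub>E i\<in>{..<l}. G)"])
    (auto simp: finite_PiE)

lemma cyclic_pred_mod:
  fixes i l :: nat
  assumes "i < l"
  shows "((i + l - 1) mod l + 1) mod l = i" and "2 \<le> l \<Longrightarrow> (i + l - 1) mod l \<noteq> i"
  using assms by (cases i; simp add: mod_if)+

lemma card_edges_containing_pair_le:
  assumes "x \<noteq> y" "2 \<le> a"
  shows "card {f \<in> complete_hypergraph n a. x \<in> f \<and> y \<in> f} \<le> n ^ (a - 2)"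
proof -
  let ?P = "{f \<in> complete_hypergraph n a. x \<in> f \<and> y \<in> f}"
  have "inj_on (\<lambda>f. f - {x, y}) ?P"
    by (rule inj_onI) blast
  moreover have "(\<lambda>f. f - {x, y}) ` ?P \<subseteq> complete_hypergraph n (a - 2)"
    using assms(1) by (auto simp: complete_hypergraph_def card_Diff_subset dest: finite_subset)
  ultimately have "card ?P \<le> card (complete_hypergraph n (a - 2))"
    by (intro card_inj_on_le finite_complete_hypergraph)
  also have "\<dots> = n choose (a - 2)"
    by (rule card_complete_hypergraph)
  also have "\<dots> \<le> n ^ (a - 2)"
    by (cases "a - 2 \<le> n") (simp_all add: binomial_le_pow binomial_eq_0)
  finally show ?thesis .
qed

text \<open>Once the vertex sequence \<open>v\<close> of a Berge cycle is fixed, its \<open>i\<close>-th edge must contain the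
  distinct vertices \<open>v i\<close> and \<open>v ((i + l - 1) mod l)\<close>, the cyclic predecessor.\<close>

lemma card_cycle_edge_choices_le:
  assumes "inj_on v {..<l}" "2 \<le> l" "2 \<le> a"
  shows "card (\<Pi>\<^sub>E i\<in>{..<l}. {f \<in> complete_hypergraph n a. v i \<in> f \<and> v ((i + l - 1) mod l) \<in> f})
    \<le> (n ^ (a - 2)) ^ l"
proof -
  have "card {f \<in> complete_hypergraph n a. v i \<in> f \<and> v ((i + l - 1) mod l) \<in> f} \<le> n ^ (a - 2)"
    if "i < l" for i
  proof (rule card_edges_containing_pair_le[OF _ assms(3)])
    have "(i + l - 1) mod l < l" "(i + l - 1) mod l \<noteq> i"
      using that assms(2) cyclic_pred_mod(2)[OF that] by auto
    then show "v i \<noteq> v ((i + l - 1) mod l)"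
      using assms(1) that by (auto dest: inj_onD)
  qed
  then have "(\<Prod>i<l. card {f \<in> complete_hypergraph n a. v i \<in> f \<and> v ((i + l - 1) mod l) \<in> f})
      \<le> (\<Prod>i<l. n ^ (a - 2))"
    by (intro prod_mono) auto
  then show ?thesis
    by (simp add: card_PiE)
qed

lemma card_berge_cycles_complete_le:
  assumes "2 \<le> l" "2 \<le> a"
  shows "card (berge_cycles n l (complete_hypergraph n a)) \<le> (n ^ (a - 1)) ^ l"
proof -
  define Vs where "Vs = {v \<in> (\<Pi>\<^sub>E i\<in>{..<l}. {1..n}). inj_on v {..<l}}"
  define Es where "Es v = (\<Pi>\<^sub>E i\<in>{..<l}.
    {f \<in> complete_hypergraph n a. v i \<in> f \<and> v ((i + l - 1) mod l) \<in> f})" for v :: "nat \<Rightarrow> nat"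
  have "berge_cycles n l (complete_hypergraph n a) \<subseteq> Sigma Vs Es"
  proof (rule subrelI)
    fix v e assume "(v, e) \<in> berge_cycles n l (complete_hypergraph n a)"
    then have cyc: "v \<in> (\<Pi>\<^sub>E i\<in>{..<l}. {1..n})" "e \<in> (\<Pi>\<^sub>E i\<in>{..<l}. complete_hypergraph n a)"
      "inj_on v {..<l}" "\<forall>i<l. v i \<in> e i \<and> v i \<in> e ((i + 1) mod l)"
      unfolding berge_cycles_def by auto
    have "v ((i + l - 1) mod l) \<in> e i" if "i < l" for i
      using cyc(4)[rule_format, of "(i + l - 1) mod l"] cyclic_pred_mod(1)[OF that] that by simp
    then have "e \<in> Es v"
      using cyc(2,4) unfolding Es_def by (auto simp: PiE_iff)
    then show "(v, e) \<in> Sigma Vs Es"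
      using cyc(1,3) unfolding Vs_def by auto
  qed
  then have "card (berge_cycles n l (complete_hypergraph n a)) \<le> card (Sigma Vs Es)"
    by (rule card_mono[rotated]) (auto simp: Vs_def Es_def finite_PiE finite_complete_hypergraph)
  also have "\<dots> = (\<Sum>v\<in>Vs. card (Es v))"
    by (rule card_SigmaI) (auto simp: Vs_def Es_def finite_PiE finite_complete_hypergraph)
  also have "\<dots> \<le> card Vs * (n ^ (a - 2)) ^ l"
    using sum_mono[of Vs "\<lambda>v. card (Es v)" "\<lambda>_. (n ^ (a - 2)) ^ l"] card_cycle_edge_choices_le assms
    unfolding Vs_def Es_def by simp
  also have "\<dots> \<le> n ^ l * (n ^ (a - 2)) ^ l"
    using card_mono[of "\<Pi>\<^sub>E i\<in>{..<l}. {1..n}" Vs] unfolding Vs_def by (simp add: finite_PiE card_PiE)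
  also have "\<dots> = (n * n ^ (a - 2)) ^ l"
    by (simp add: power_mult_distrib)
  also have "n * n ^ (a - 2) = n ^ (a - 1)"
    using assms(2) by (metis Suc_diff_le Suc_1 diff_Suc_Suc power_Suc)
  finally show ?thesis .
qed

lemma berge_cycles_subset_eq:
  assumes "H \<subseteq> U"
  shows "berge_cycles n l H = {w \<in> berge_cycles n l U. snd w ` {..<l} \<subseteq> H}"
  using assms unfolding berge_cycles_def by (auto simp: PiE_iff)

lemma sum_card_berge_cycles_le:
  assumes "2 \<le> l" "2 \<le> a"
  shows "(\<Sum>H\<in>hyp_family a n m. real (card (berge_cycles n l H)))
    \<le> real ((n choose a) choose m) * (real n ^ (a - 1) * real m / real (n choose a)) ^ l"
proof -
  define K where "K = complete_hypergraph n a"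
  define F where "F = hyp_family a n m"
  let ?in = "\<lambda>w H. of_bool (snd w ` {..<l} \<subseteq> H) :: real"
  have fin: "finite K" "finite F" "finite (berge_cycles n l K)"
    unfolding K_def F_def by (simp_all add: finite_complete_hypergraph finite_hyp_family finite_berge_cycles)
  have "real (card (berge_cycles n l H)) = (\<Sum>w\<in>berge_cycles n l K. ?in w H)" if "H \<in> F" for H
  proof -
    have "berge_cycles n l H = berge_cycles n l K \<inter> {w. snd w ` {..<l} \<subseteq> H}"
      using that berge_cycles_subset_eq[of H K n l] unfolding F_def K_def hyp_family_eq by auto
    then show ?thesis
      using fin by simp
  qed
  then have "(\<Sum>H\<in>F. real (card (berge_cycles n l H))) = (\<Sum>w\<in>berge_cycles n l K. \<Sum>H\<in>F. ?in w H)"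
    by (simp add: sum.swap[of _ F])
  also have "\<dots> \<le> (\<Sum>w\<in>berge_cycles n l K. real ((n choose a) choose m) * (real m / real (n choose a)) ^ l)"
  proof (rule sum_mono)
    fix w assume "w \<in> berge_cycles n l K"
    then have e: "snd w \<in> (\<Pi>\<^sub>E i\<in>{..<l}. K)" "inj_on (snd w) {..<l}"
      unfolding berge_cycles_def by auto
    then have "snd w ` {..<l} \<subseteq> K" "card (snd w ` {..<l}) = l"
      by (auto simp: card_image)
    moreover have "F \<inter> {H. snd w ` {..<l} \<subseteq> H} = {H. H \<subseteq> K \<and> card H = m \<and> snd w ` {..<l} \<subseteq> H}"
      unfolding F_def K_def hyp_family_eq by auto
    ultimately show "(\<Sum>H\<in>F. ?in w H) \<le> real ((n choose a) choose m) * (real m / real (n choose a)) ^ l"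
      using fin card_supersets_le[OF fin(1), of "snd w ` {..<l}" m]
      unfolding K_def card_complete_hypergraph by simp
  qed
  also have "\<dots> = real (card (berge_cycles n l K)) * (real ((n choose a) choose m) * (real m / real (n choose a)) ^ l)"
    by simp
  also have "\<dots> \<le> (real n ^ (a - 1)) ^ l * (real ((n choose a) choose m) * (real m / real (n choose a)) ^ l)"
  proof (rule mult_right_mono)
    have "real (card (berge_cycles n l K)) \<le> real ((n ^ (a - 1)) ^ l)"
      using card_berge_cycles_complete_le[OF assms, of n] unfolding K_def by (simp only: of_nat_le_iff)
    then show "real (card (berge_cycles n l K)) \<le> (real n ^ (a - 1)) ^ l"
      by simp
  qed simp
  also have "\<dots> = real ((n choose a) choose m) * (real n ^ (a - 1) * real m / real (n choose a)) ^ l"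
    by (simp add: power_mult_distrib power_divide)
  finally show ?thesis
    unfolding F_def .
qed

definition short_cycle_edges :: "nat \<Rightarrow> nat \<Rightarrow> nat set set \<Rightarrow> nat set set" where
  "short_cycle_edges n k H = (\<Union>l\<in>{2..k}. (\<lambda>w. snd w 0) ` berge_cycles n l H)"

lemma short_cycle_edges_subset: "short_cycle_edges n k H \<subseteq> H"
  unfolding short_cycle_edges_def berge_cycles_def by auto

lemma card_short_cycle_edges_le:
  assumes "finite H"
  shows "card (short_cycle_edges n k H) \<le> (\<Sum>l\<in>{2..k}. card (berge_cycles n l H))"
proof -
  have "card (short_cycle_edges n k H) \<le> (\<Sum>l\<in>{2..k}. card ((\<lambda>w. snd w 0) ` berge_cycles n l H))"
    unfolding short_cycle_edges_def by (rule card_UN_le) simp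
  also have "\<dots> \<le> (\<Sum>l\<in>{2..k}. card (berge_cycles n l H))"
    by (rule sum_mono) (rule card_image_le[OF finite_berge_cycles[OF assms]])
  finally show ?thesis .
qed

lemma girth_gt_Diff_short_cycle_edges:
  assumes "H \<subseteq> complete_hypergraph n a"
  shows "girth_gt (H - short_cycle_edges n k H) k"
  unfolding girth_gt_def
proof (intro allI impI notI)
  fix l assume "l \<le> k" "has_berge_cycle (H - short_cycle_edges n k H) l"
  then obtain e v where l: "2 \<le> l" "l \<le> k" and inj: "inj_on e {..<l}" "inj_on v {..<l}"
    and eH: "\<forall>i<l. e i \<in> H - short_cycle_edges n k H"
    and cyc: "\<forall>i<l. v i \<in> e i \<and> v i \<in> e ((i + 1) mod l)"
    unfolding has_berge_cycle_def by blast
  have "v i \<in> {1..n}" if "i < l" for i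
    using that cyc eH assms unfolding complete_hypergraph_def by blast
  then have "(restrict v {..<l}, restrict e {..<l}) \<in> berge_cycles n l H"
    using inj eH cyc unfolding berge_cycles_def by (auto simp: inj_on_def)
  then have "e 0 \<in> short_cycle_edges n k H"
    using l unfolding short_cycle_edges_def by (force simp: image_iff)
  with eH l show False
    by auto
qed

lemma sum_card_short_berge_cycles_le:
  fixes r :: real
  assumes "2 \<le> a" "1 \<le> r" "real n ^ (a - 1) * real m / real (n choose a) \<le> r"
  shows "(\<Sum>H\<in>hyp_family a n m. \<Sum>l\<in>{2..k}. real (card (berge_cycles n l H)))
    \<le> real k * real ((n choose a) choose m) * r ^ k"
proof -
  define C where "C = real ((n choose a) choose m)"
  have per_length: "(\<Sum>H\<in>hyp_family a n m. real (card (berge_cycles n l H))) \<le> C * r ^ k"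
    if "l \<in> {2..k}" for l
  proof -
    have "(\<Sum>H\<in>hyp_family a n m. real (card (berge_cycles n l H)))
        \<le> C * (real n ^ (a - 1) * real m / real (n choose a)) ^ l"
      using that assms(1) unfolding C_def by (intro sum_card_berge_cycles_le) auto
    also have "\<dots> \<le> C * r ^ k"
      using that assms(2,3) unfolding C_def
      by (intro mult_left_mono order_trans[OF power_mono power_increasing]) auto
    finally show ?thesis .
  qed
  have "(\<Sum>H\<in>hyp_family a n m. \<Sum>l\<in>{2..k}. real (card (berge_cycles n l H)))
      = (\<Sum>l\<in>{2..k}. \<Sum>H\<in>hyp_family a n m. real (card (berge_cycles n l H)))"
    by (rule sum.swap)
  also have "\<dots> \<le> (\<Sum>l\<in>{2..k}. C * r ^ k)"
    by (rule sum_mono) (rule per_length)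
  also have "\<dots> \<le> real k * (C * r ^ k)"
    using assms(2) unfolding C_def by (simp add: mult_right_mono)
  finally show ?thesis
    unfolding C_def by (simp add: mult_ac)
qed

lemma card_ge_mult_le_sum:
  fixes f :: "'a \<Rightarrow> real"
  assumes "finite A" "\<And>x. x \<in> A \<Longrightarrow> 0 \<le> f x"
  shows "real (card {x \<in> A. t \<le> f x}) * t \<le> (\<Sum>x\<in>A. f x)"
proof -
  have "real (card {x \<in> A. t \<le> f x}) * t = (\<Sum>x\<in>{x \<in> A. t \<le> f x}. t)"
    by simp
  also have "\<dots> \<le> (\<Sum>x\<in>{x \<in> A. t \<le> f x}. f x)"
    by (rule sum_mono) simp
  also have "\<dots> \<le> (\<Sum>x\<in>A. f x)"
    using assms by (intro sum_mono2) auto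
  finally show ?thesis .
qed

section \<open>Hypergraphs of large girth\<close>

lemma card_many_short_cycles_lt:
  fixes e K :: real
  assumes a: "2 \<le> a" and e: "0 < e"
    and K: "1 \<le> K" and L: "1 \<le> L" "2 * real k * K ^ k < e * real L"
    and n: "n = L ^ k" "real n ^ a \<le> K * real (n choose a)" "n * L \<le> n choose a"
  shows "real (card {H \<in> hyp_family a n (n * L).
      e * real (n * L) \<le> (\<Sum>l\<in>{2..k}. real (card (berge_cycles n l H)))})
    < real ((n choose a) choose (n * L)) / 2"
proof -
  define m where "m = n * L"
  define C where "C = real ((n choose a) choose m)"
  define N where "N = real (n choose a)"
  let ?Bad = "{H \<in> hyp_family a n m. e * real m \<le> (\<Sum>l\<in>{2..k}. real (card (berge_cycles n l H)))}"
  have "0 < n * L"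
    using n(1) L by simp
  with n(3) have "0 < n choose a"
    by linarith
  with n(3) \<open>0 < n * L\<close> have pos: "0 < real n" "0 < N" "0 < C"
    unfolding N_def C_def m_def by (auto simp: zero_less_binomial_iff)
  have "real n ^ (a - 1) * real m = real n ^ a * real L"
    using a unfolding m_def by (simp add: power_eq_if)
  also have "\<dots> \<le> K * N * real L"
    using n(2) unfolding N_def by (intro mult_right_mono) auto
  finally have "real n ^ (a - 1) * real m / N \<le> K * real L"
    using pos by (simp add: field_simps)
  moreover have "1 \<le> K * real L"
    using K L mult_mono[of 1 K 1 "real L"] by simp
  ultimately have "real (card ?Bad) * (e * real m) \<le> real k * C * (K * real L) ^ k"
    unfolding C_def N_def
    by (intro order_trans[OF card_ge_mult_le_sum sum_card_short_berge_cycles_le[OF a]])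
      (auto simp: finite_hyp_family sum_nonneg)
  also have "\<dots> = C * real n / 2 * (2 * real k * K ^ k)"
    unfolding n(1) by (simp add: power_mult_distrib)
  also have "\<dots> < C * real n / 2 * (e * real L)"
    using L(2) pos by (intro mult_strict_left_mono) auto
  also have "\<dots> = C / 2 * (e * real m)"
    unfolding m_def by simp
  finally have "real (card ?Bad) < C / 2"
    by (rule mult_right_less_imp_less) (use e pos L in \<open>simp add: m_def\<close>)
  then show ?thesis
    unfolding C_def m_def .
qed

lemma card_rainbow_excess_lt_half:
  fixes u :: real
  assumes ab: "a \<le> b" "0 < b" and u: "0 < u" "u \<le> 1/4"
    and n: "2 \<le> n" "a \<le> n" "real n ^ a \<le> (1 + u) * fact a * real (n choose a)" "m \<le> n choose a"
    and m: "real n * (ln (real b) + 1) \<le> rb_const a b * u\<^sup>2 * real m"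
  shows "real (card {H \<in> hyp_family a n m. has_large_rainbow_sub b (rb_const a b * (1 + 4 * u) * real m) H})
    < real ((n choose a) choose m) / 2"
proof -
  have "exp (- real n) \<le> exp (- 2)"
    using n(1) by simp
  also have "\<dots> < 1 / 2"
    using exp_ge_add_one_self[of "2 :: real"] by (simp add: exp_minus field_simps)
  finally have "real ((n choose a) choose m) * exp (- real n) < real ((n choose a) choose m) / 2"
    using n(4) by simp
  moreover have "real (card {H \<in> hyp_family a n m. has_large_rainbow_sub b (rb_const a b * (1 + 4 * u) * real m) H})
      \<le> real ((n choose a) choose m) * exp (- real n)"
    by (rule card_rainbow_excess_le_exp[OF ab u n(2,3) m]) simp
  ultimately show ?thesis
    by linarith
qed

lemma power_le_binomial_mult: "a \<le> n \<Longrightarrow> real n ^ a \<le> real a ^ a * real (n choose a)"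
  using binomial_ge_n_over_k_pow_k[of a n, where 'a = real]
  by (cases "a = 0") (simp_all add: power_divide field_simps)

lemma power_mult_le_binomial:
  fixes K :: real
  assumes "2 \<le> a" "2 \<le> k" "1 \<le> K" "K \<le> real L" "real (L ^ k) ^ a \<le> K * real (L ^ k choose a)"
  shows "L ^ k * L \<le> L ^ k choose a"
proof -
  have "K * real (L ^ k * L) \<le> real L * real (L ^ k * L)"
    using assms(4) by (intro mult_right_mono) auto
  also have "\<dots> = real L ^ (k + 2)"
    by (simp add: power_add power2_eq_square)
  also have "\<dots> \<le> real L ^ (k * a)"
  proof (rule power_increasing)
    show "k + 2 \<le> k * a"
      using assms(2) mult_le_mono2[OF assms(1), of k] by linarith
  qed (use assms(3,4) in auto)
  also have "\<dots> \<le> K * real (L ^ k choose a)"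
    using assms(5) by (simp add: power_mult)
  finally have "K * real (L ^ k * L) \<le> K * real (L ^ k choose a)" .
  moreover have "0 < K"
    using assms(3) by simp
  ultimately show ?thesis
    by (simp only: mult_le_cancel_left_pos of_nat_le_iff)
qed

lemma exists_outside_two_subsets:
  assumes "finite A" "B \<subseteq> A" "C \<subseteq> A" "real (card B) + real (card C) < real (card A)"
  shows "\<exists>x\<in>A. x \<notin> B \<and> x \<notin> C"
proof (rule ccontr)
  assume "\<not> ?thesis"
  then have "card A \<le> card (B \<union> C)"
    using assms(1-3) by (intro card_mono) (auto intro: finite_subset)
  also have "\<dots> \<le> card B + card C"
    by (rule card_Un_le)
  finally show False
    using assms(4) by linarith
qed

text \<open>The parameters \<open>n = L ^ k\<close> and \<open>m = n L\<close> make the expected number of short cycles,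
  of order \<open>L ^ k = n\<close>, negligible against \<open>m\<close>, while \<open>m / n = L\<close> is large enough for the
  union bound over all \<open>b ^ n\<close> colourings.\<close>

lemma exists_hypergraph_few_short_cycles_no_large_rainbow:
  fixes e :: real
  assumes ab: "2 \<le> a" "a \<le> b" and k: "2 \<le> k" and e: "0 < e" "e \<le> 1"
  obtains n m H where "H \<in> hyp_family a n m" "0 < m"
    "\<not> has_large_rainbow_sub b (rb_const a b * (1 + e) * real m) H"
    "(\<Sum>l\<in>{2..k}. real (card (berge_cycles n l H))) < e * real m"
proof -
  define u where "u = e / 4"
  define \<delta> where "\<delta> = rb_const a b * u\<^sup>2"
  define K where "K = real a ^ a"
  have u: "0 < u" "u \<le> 1/4" "e = 4 * u"
    using e unfolding u_def by auto
  have "0 < \<delta>"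
    unfolding \<delta>_def using rb_const_pos[of a b] ab u by simp
  have K: "1 \<le> K"
    unfolding K_def using ab by simp
  obtain N0 where N0: "\<And>n. N0 \<le> n \<Longrightarrow> a \<le> n \<and> real n ^ a \<le> (1 + u) * fact a * real (n choose a)"
    using eventually_power_le_binomial[OF u(1), of a] unfolding eventually_at_top_linorder by blast
  have "eventually (\<lambda>L. N0 \<le> L \<and> 2 \<le> L \<and> K < real L \<and> (ln (real b) + 1) / \<delta> < real L
      \<and> 2 * real k * K ^ k / e < real L) sequentially"
    using filterlim_real_sequentially unfolding filterlim_at_top_dense
    by (intro eventually_conj eventually_ge_at_top) auto
  then obtain L where L: "N0 \<le> L" "2 \<le> L" "K \<le> real L" "(ln (real b) + 1) / \<delta> \<le> real L"
    "2 * real k * K ^ k < e * real L"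
    using e by (auto simp: eventually_sequentially field_simps)
  define n where "n = L ^ k"
  define m where "m = n * L"
  have "L \<le> n"
    unfolding n_def using L(2) k by (simp add: self_le_power)
  then have n: "2 \<le> n" "a \<le> n" "real n ^ a \<le> (1 + u) * fact a * real (n choose a)"
    using N0[of n] L by auto
  then have n_binomial: "real n ^ a \<le> K * real (n choose a)"
    unfolding K_def by (intro power_le_binomial_mult)
  have "m \<le> n choose a"
    unfolding m_def n_def using ab k K L(3) n_binomial[unfolded n_def]
    by (intro power_mult_le_binomial) auto
  define F where "F = hyp_family a n m"
  define Bad1 where "Bad1 = {H \<in> F. has_large_rainbow_sub b (rb_const a b * (1 + e) * real m) H}"
  define Bad2 where "Bad2 = {H \<in> F. e * real m \<le> (\<Sum>l\<in>{2..k}. real (card (berge_cycles n l H)))}"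
  have "real n * (ln (real b) + 1) \<le> real n * (\<delta> * real L)"
    using L(4) \<open>0 < \<delta>\<close> by (intro mult_left_mono) (auto simp: field_simps)
  then have "real (card Bad1) < real (card F) / 2"
    unfolding Bad1_def F_def card_hyp_family \<delta>_def u(3) m_def
    using ab n \<open>m \<le> n choose a\<close> u by (intro card_rainbow_excess_lt_half) (auto simp: m_def mult_ac)
  moreover have "real (card Bad2) < real (card F) / 2"
    unfolding Bad2_def F_def card_hyp_family m_def
    using ab e K L \<open>m \<le> n choose a\<close> n_binomial
    by (intro card_many_short_cycles_lt) (auto simp: n_def m_def)
  ultimately obtain H where H: "H \<in> F" "H \<notin> Bad1" "H \<notin> Bad2"
    using exists_outside_two_subsets[of F Bad1 Bad2] unfolding F_def Bad1_def Bad2_def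
    by (auto simp: finite_hyp_family)
  moreover have "0 < m"
    unfolding m_def n_def using L(2) by simp
  ultimately show ?thesis
    using that unfolding F_def Bad1_def Bad2_def by auto
qed

lemma has_large_rainbow_sub_mono:
  "has_large_rainbow_sub b t H' \<Longrightarrow> H' \<subseteq> H \<Longrightarrow> s \<le> t \<Longrightarrow> has_large_rainbow_sub b s H"
  unfolding has_large_rainbow_sub_def by (meson order_trans le_less_trans)

lemma high_girth_subhypergraph:
  fixes e \<epsilon> :: real
  assumes H: "H \<subseteq> complete_hypergraph n a" "card H = m" "0 < m"
    and rainbow: "\<not> has_large_rainbow_sub b (rb_const a b * (1 + e) * real m) H"
    and cycles: "(\<Sum>l\<in>{2..k}. real (card (berge_cycles n l H))) < e * real m"
    and e: "0 < e" "e \<le> 1/3" "3 * e \<le> \<epsilon>"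
  shows "\<exists>H'\<subseteq>H. uniform_hypergraph a H' \<and> H' \<noteq> {} \<and> girth_gt H' k
    \<and> \<not> has_large_rainbow_sub b (rb_const a b * real (card H') * (1 + \<epsilon>)) H'"
proof (intro exI conjI)
  let ?H' = "H - short_cycle_edges n k H"
  have "finite H"
    using H(1) finite_complete_hypergraph by (rule finite_subset)
  then have "card ?H' = card H - card (short_cycle_edges n k H)"
    by (meson card_Diff_subset finite_subset short_cycle_edges_subset)
  moreover have "real (card (short_cycle_edges n k H)) < e * real m"
    using card_short_cycle_edges_le[OF \<open>finite H\<close>, of n k] cycles by (simp flip: of_nat_sum)
  ultimately have large: "(1 - e) * real m < real (card ?H')"
    using H(2) by (simp add: algebra_simps)
  moreover have "0 \<le> (1 - e) * real m"
    using e by simp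
  ultimately have "0 < card ?H'"
    by linarith
  then show "?H' \<noteq> {}"
    by (metis card.empty less_irrefl)
  show "uniform_hypergraph a ?H'"
    using H(1) \<open>finite H\<close> unfolding uniform_hypergraph_def complete_hypergraph_def
    by (auto intro: finite_subset)
  show "girth_gt ?H' k"
    using H(1) by (rule girth_gt_Diff_short_cycle_edges)
  have "(1 + e) * real m \<le> (1 - e) * real m * (1 + 3 * e)"
    using e mult_right_mono[of "1 + e" "(1 - e) * (1 + 3 * e)" "real m"] by (simp add: algebra_simps)
  also have "\<dots> \<le> real (card ?H') * (1 + \<epsilon>)"
    using large e by (intro mult_mono) auto
  finally have "rb_const a b * (1 + e) * real m \<le> rb_const a b * real (card ?H') * (1 + \<epsilon>)"
    unfolding mult.assoc by (rule mult_left_mono) (simp add: rb_const_def)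
  then show "\<not> has_large_rainbow_sub b (rb_const a b * real (card ?H') * (1 + \<epsilon>)) ?H'"
    using rainbow has_large_rainbow_sub_mono[of b _ ?H' H] by blast
qed (rule Diff_subset)

theorem proposition16:
  fixes \<epsilon> :: real and a b :: nat
  assumes "\<epsilon> > 0" and "2 \<le> a" and "a \<le> b"
  shows "(\<forall>m :: nat \<Rightarrow> nat. filterlim (\<lambda>n. real (m n) / real n) at_top at_top \<longrightarrow>
            ((\<lambda>n. real (card {H \<in> hyp_family a n (m n).
                    has_large_rainbow_sub b (rb_const a b * real (card H) * (1 + \<epsilon>)) H})
                  / real ((n choose a) choose (m n)))
             \<longlonglongrightarrow> 0))
       \<and> (\<forall>k\<ge>2. \<exists>H :: nat set set. uniform_hypergraph a H \<and> H \<noteq> {} \<and> girth_gt H k \<and>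
            \<not> has_large_rainbow_sub b (rb_const a b * real (card H) * (1 + \<epsilon>)) H)"
proof (intro conjI allI impI)
  fix m :: "nat \<Rightarrow> nat"
  assume "filterlim (\<lambda>n. real (m n) / real n) at_top at_top"
  with assms show "(\<lambda>n. real (card {H \<in> hyp_family a n (m n).
      has_large_rainbow_sub b (rb_const a b * real (card H) * (1 + \<epsilon>)) H})
    / real ((n choose a) choose (m n))) \<longlonglongrightarrow> 0"
    by (rule rainbow_excess_fraction_tendsto_0)
next
  fix k :: nat
  assume "2 \<le> k"
  define e where "e = min \<epsilon> 1 / 3"
  have e: "0 < e" "e \<le> 1/3" "3 * e \<le> \<epsilon>"
    using assms(1) unfolding e_def by auto
  obtain n m H where "H \<in> hyp_family a n m" "0 < m"
    "\<not> has_large_rainbow_sub b (rb_const a b * (1 + e) * real m) H"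
    "(\<Sum>l\<in>{2..k}. real (card (berge_cycles n l H))) < e * real m"
    by (rule exists_hypergraph_few_short_cycles_no_large_rainbow[OF assms(2,3) \<open>2 \<le> k\<close> e(1)])
      (use e in auto)
  moreover from \<open>H \<in> hyp_family a n m\<close> have "H \<subseteq> complete_hypergraph n a" "card H = m"
    unfolding hyp_family_eq by auto
  ultimately show "\<exists>H :: nat set set. uniform_hypergraph a H \<and> H \<noteq> {} \<and> girth_gt H k \<and>
      \<not> has_large_rainbow_sub b (rb_const a b * real (card H) * (1 + \<epsilon>)) H"
    using high_girth_subhypergraph[of H n a m b e k \<epsilon>] e by blast
qed

end
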